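(* The size $z_{End}$ of the LZ-End factorization satisfies, for each edit type $\ast\in\{\mathrm{sub},\mathrm{ins},\mathrm{del}\}$ (the alphabet being allowed to contain as many distinct characters as needed): $\liminf_{n\to\infty}\mathsf{MS}_{\ast}(z_{End},n)\ge 2$, $\mathsf{AS}_{\ast}(z_{End},n)\ge z_{End}-\Theta(\sqrt{z_{End}})$, and $\mathsf{AS}_{\ast}(z_{End},n)=\Omega(\sqrt n)$.
   Context: $\mathsf{ed}$ is the edit distance. $\mathsf{MS}_{\mathrm{sub}}(C,n)=\max_{T\in\Sigma^n}\{C(T')/C(T): T'\in\Sigma^n,\ \mathsf{ed}(T,T')=1\}$, with $\mathsf{MS}_{\mathrm{ins}},\mathsf{MS}_{\mathrm{del}}$ analogous for $T'$ of length $n+1$, resp. $n-1$, and $\mathsf{AS}_\ast$ analogous with $C(T')-C(T)$. Bounds in terms of $z_{End}$ refer to $z_{End}(T)$ of the original string and assert existence of strings $T$ (with $z_{End}(T)$ arbitrarily large) and edited $T'$ achieving them. The LZ-End factorization of $T$ (length $n$) is $T=f_1\cdots f_z$ where for each $1\le i<z$, $f_i[1..|f_i|-1]$ is the longest prefix of $f_i\cdots f_z$ that occurs as a suffix of some string in $\{\varepsilon, f_1, f_1f_2,\ldots,f_1\cdots f_{i-1}\}$ (so $f_i$ is one character longer), and $f_z$ is the remaining suffix; $z_{End}(T)=z$. *)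

theory Defs
  imports Complex_Main "HOL-Library.Landau_Symbols" "HOL-Library.Extended_Real"
begin

fun ed :: "'a list \<Rightarrow> 'a list \<Rightarrow> nat" where
  "ed [] ys = length ys"
| "ed xs [] = length xs"
| "ed (x # xs) (y # ys) =
     min (min (Suc (ed xs (y # ys))) (Suc (ed (x # xs) ys)))
         (ed xs ys + (if x = y then 0 else 1))"

text \<open>Given the string T, the list E of phrase end positions so far (including 0, i.e. the
empty prefix) and the current position pos, the next phrase is f = p c where p is the longest
prefix of drop pos T that occurs as a suffix of take e T for some e in E; the last phrase is
the remaining suffix (so the phrase length is min (|p|+1) (|T|-pos)).\<close>

definition lze_longest :: "'a list \<Rightarrow> nat list \<Rightarrow> nat \<Rightarrow> nat" where
  "lze_longest T E pos = (GREATEST l. l \<le> length T - pos \<and>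
      (\<exists>e\<in>set E. l \<le> e \<and> take l (drop pos T) = drop (e - l) (take e T)))"

function lzend_phrases :: "'a list \<Rightarrow> nat list \<Rightarrow> nat \<Rightarrow> 'a list list" where
  "lzend_phrases T E pos =
     (if length T \<le> pos then []
      else (let len = min (Suc (lze_longest T E pos)) (length T - pos)
            in take len (drop pos T) # lzend_phrases T (E @ [pos + len]) (pos + len)))"
  by pat_completeness auto
termination
  by (relation "measure (\<lambda>(T, E, pos). length T - pos)") auto

definition lzend_factorization :: "'a list \<Rightarrow> 'a list list" where
  "lzend_factorization T = lzend_phrases T [0] 0"

definition z_End :: "'a list \<Rightarrow> nat" where
  "z_End T = length (lzend_factorization T)"

datatype edit_type = Sub | Ins | Del

definition edit_ok :: "edit_type \<Rightarrow> 'a list \<Rightarrow> 'a list \<Rightarrow> bool" where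
  "edit_ok k T T' \<longleftrightarrow>
     length T' = (case k of Sub \<Rightarrow> length T | Ins \<Rightarrow> Suc (length T) | Del \<Rightarrow> length T - 1)
     \<and> ed T T' = 1"

text \<open>Alphabet: nat (as many distinct characters as needed).\<close>

definition MS :: "(nat list \<Rightarrow> nat) \<Rightarrow> edit_type \<Rightarrow> nat \<Rightarrow> real" where
  "MS C k n = Sup {real (C T') / real (C T) | T T'. length T = n \<and> edit_ok k T T'}"

definition AS :: "(nat list \<Rightarrow> nat) \<Rightarrow> edit_type \<Rightarrow> nat \<Rightarrow> real" where
  "AS C k n = Sup {real (C T') - real (C T) | T T'. length T = n \<and> edit_ok k T T'}"

end

theory Submission
  imports Defs "HOL-Library.Sublist"
begin

(*
  Witnesses: T = 0^m 1 2 B_1 ... B_K with blocks B_j = 0^(j-1) 1 c_j, where each c_j is a fresh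
  character, K ~ sqrt (2 n) and 2 K <= m = O(K).  LZ-End parses the zero run 0^m 1 into
  O(log m) phrases of doubling length, the 2 into one phrase, and each block into a single
  phrase, because 0^(j-1) 1 is a suffix of the phrase ending at the 1 after the zero run; so
  z_End(T) = K + O(log K).  Substituting that 1 by 3, deleting it, or inserting 3 in front of it
  destroys this source: 0^(j-1) 1 no longer occurs before block j (for j >= 2 after the insertion),
  so each block costs the two phrases 0^(j-1) 1 and c_j, and z_End(T') >= 2 K + 1.  Hence the
  ratio tends to 2, the difference is z_End(T) - O(log z_End(T)), and it is Omega(K) = Omega(sqrt n).
*)

declare lzend_phrases.simps [simp del]

lemma lzend_phrases_Nil: "length T \<le> pos \<Longrightarrow> lzend_phrases T E pos = []"
  by (subst lzend_phrases.simps) simp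

lemma length_lzend_phrases_le: "length (lzend_phrases T E pos) \<le> length T - pos"
proof (induction T E pos rule: lzend_phrases.induct)
  case (1 T E pos)
  then show ?case
    by (subst lzend_phrases.simps) (auto simp: Let_def min_def)
qed

lemma z_End_eq: "z_End T = length (lzend_phrases T [0] 0)"
  by (simp add: z_End_def lzend_factorization_def)

lemma z_End_le_length: "z_End T \<le> length T"
  using length_lzend_phrases_le[of T "[0]" 0] by (simp add: z_End_eq)

lemma length_lzend_phrases_step:
  assumes "lze_longest T E pos = L" "pos + L < length T"
  shows "length (lzend_phrases T E pos) =
    Suc (length (lzend_phrases T (E @ [pos + Suc L]) (pos + Suc L)))"
proof -
  have "Suc L \<le> length T - pos" using assms(2) by simp
  then show ?thesis using assms(1) by (subst lzend_phrases.simps) (simp add: Let_def min_def)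
qed

lemma lze_longest_eqI:
  assumes "L \<le> length T - pos" "e \<in> set E" "L \<le> e"
    and "take L (drop pos T) = drop (e - L) (take e T)"
    and "\<And>l e. l \<le> length T - pos \<Longrightarrow> e \<in> set E \<Longrightarrow> l \<le> e \<Longrightarrow>
      take l (drop pos T) = drop (e - l) (take e T) \<Longrightarrow> l \<le> L"
  shows "lze_longest T E pos = L"
  unfolding lze_longest_def by (rule Greatest_equality) (use assms in blast)+

lemma length_lzend_phrases_copy_step:
  assumes "pos + L < length T" "e \<in> set E" "L \<le> e"
    and "take L (drop pos T) = drop (e - L) (take e T)"
    and "\<forall>e\<in>set E. e \<le> pos"
    and "\<not> sublist (take (Suc L) (drop pos T)) (take pos T)"
  shows "length (lzend_phrases T E pos) =
    Suc (length (lzend_phrases T (E @ [pos + Suc L]) (pos + Suc L)))"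
proof -
  have "lze_longest T E pos = L"
  proof (rule lze_longest_eqI[OF _ assms(2-4)])
    show "L \<le> length T - pos" using assms(1) by simp
    fix l e' assume l: "e' \<in> set E" "l \<le> e'" "take l (drop pos T) = drop (e' - l) (take e' T)"
    show "l \<le> L"
    proof (rule ccontr)
      assume "\<not> l \<le> L"
      then have "take (Suc L) (drop pos T) = take (Suc L) (drop (e' - l) (take e' T))"
        using l(3) by (metis min.absorb1 not_less_eq_eq take_take)
      moreover have "take e' T = take e' (take pos T)" using assms(5) l(1) by (simp add: min_def)
      then have "sublist (take (Suc L) (drop (e' - l) (take e' T))) (take pos T)"
        by (metis sublist_order.dual_order.trans sublist_drop sublist_take)
      ultimately show False using assms(6) by simp
    qed
  qed
  then show ?thesis using assms(1) by (rule length_lzend_phrases_step)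
qed

lemma length_lzend_phrases_fresh_step:
  assumes "pos + L < length T" "e \<in> set E" "L \<le> e"
    and "take L (drop pos T) = drop (e - L) (take e T)"
    and "\<forall>e\<in>set E. e \<le> pos"
    and "T ! (pos + L) \<notin> set (take pos T)"
  shows "length (lzend_phrases T E pos) =
    Suc (length (lzend_phrases T (E @ [pos + Suc L]) (pos + Suc L)))"
proof (rule length_lzend_phrases_copy_step[OF assms(1-5)])
  have "T ! (pos + L) \<in> set (take (Suc L) (drop pos T))"
    using assms(1) by (auto simp: in_set_conv_nth intro!: exI[of _ L])
  then show "\<not> sublist (take (Suc L) (drop pos T)) (take pos T)"
    using assms(6) set_mono_sublist by blast
qed

lemma length_lzend_phrases_fresh_char:
  assumes "pos < length T" "E \<noteq> []" "\<forall>e\<in>set E. e \<le> pos" "T ! pos \<notin> set (take pos T)"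
  shows "length (lzend_phrases T E pos) = Suc (length (lzend_phrases T (E @ [Suc pos]) (Suc pos)))"
  using length_lzend_phrases_fresh_step[of pos 0 T "hd E" E] assms by simp

lemma length_lzend_phrases_doubling_step:
  assumes "pos + pos < length T" "pos \<in> set E" "\<forall>e\<in>set E. e \<le> pos"
    and "take pos (drop pos T) = take pos T"
  shows "length (lzend_phrases T E pos) =
    Suc (length (lzend_phrases T (E @ [pos + Suc pos]) (pos + Suc pos)))"
proof -
  have "lze_longest T E pos = pos"
    by (rule lze_longest_eqI[OF _ assms(2)]) (use assms in auto)
  then show ?thesis using assms(1) by (rule length_lzend_phrases_step)
qed

(* While 2 pos + 1 <= m, the phrase at pos copies the prefix 0^pos, doubling the parsed part;
   the last phrase copies the remaining zeros from the phrase end e0 >= m / 2 and ends with c. *)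
lemma lzend_phrases_zero_run:
  fixes c :: nat
  assumes T: "T = replicate m 0 @ c # R" and c: "c \<noteq> 0"
  shows "pos \<le> m \<Longrightarrow> pos \<in> set E \<Longrightarrow> \<forall>e\<in>set E. e \<le> pos \<Longrightarrow>
    \<exists>E' cnt. length (lzend_phrases T E pos) = cnt + length (lzend_phrases T E' (Suc m))
      \<and> 1 \<le> cnt \<and> (pos + 1) * 2 ^ (cnt - 1) \<le> m + 1
      \<and> (\<forall>e\<in>set E'. e \<le> Suc m) \<and> Suc m \<in> set E'
      \<and> (\<exists>e0\<in>set E'. m \<le> 2 * e0 \<and> e0 \<le> m)"
proof (induction "m - pos" arbitrary: pos E rule: less_induct)
  case less
  show ?case
  proof (cases "2 * pos + 1 \<le> m")
    case True
    have square: "take pos (drop pos T) = take pos T"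
      using True T by (simp add: take_drop min_def)
    have step: "length (lzend_phrases T E pos) =
        Suc (length (lzend_phrases T (E @ [pos + Suc pos]) (pos + Suc pos)))"
      by (rule length_lzend_phrases_doubling_step) (use square less.prems True T in auto)
    have "m - (pos + Suc pos) < m - pos" "\<forall>e\<in>set (E @ [pos + Suc pos]). e \<le> pos + Suc pos"
      using True less.prems(3) by auto
    then obtain E' cnt where IH:
        "length (lzend_phrases T (E @ [pos + Suc pos]) (pos + Suc pos))
          = cnt + length (lzend_phrases T E' (Suc m))"
        "1 \<le> cnt" "(pos + Suc pos + 1) * 2 ^ (cnt - 1) \<le> m + 1"
        "\<forall>e\<in>set E'. e \<le> Suc m" "Suc m \<in> set E'" "\<exists>e0\<in>set E'. m \<le> 2 * e0 \<and> e0 \<le> m"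
      using less.hyps[of "pos + Suc pos" "E @ [pos + Suc pos]"] True by auto
    have "(pos + 1) * 2 ^ (Suc cnt - 1) = (pos + Suc pos + 1) * 2 ^ (cnt - 1)"
      using IH(2) by (cases cnt) auto
    then show ?thesis
      using step IH by (intro exI[of _ E'] exI[of _ "Suc cnt"]) simp
  next
    case False
    define L where "L = m - pos"
    have "take L (drop pos T) = drop (pos - L) (take pos T)"
      using less.prems(1) T False by (simp add: L_def take_drop min_def)
    moreover have "T ! (pos + L) \<notin> set (take pos T)"
      using less.prems(1) T c by (simp add: L_def nth_append min_def)
    ultimately have "length (lzend_phrases T E pos) =
        Suc (length (lzend_phrases T (E @ [pos + Suc L]) (pos + Suc L)))"
      using less.prems T False by (intro length_lzend_phrases_fresh_step) (auto simp: L_def)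
    moreover have "pos + Suc L = Suc m" using less.prems(1) by (simp add: L_def)
    moreover have "\<forall>e\<in>set (E @ [Suc m]). e \<le> Suc m" using less.prems(1,3) by auto
    moreover have "pos \<in> set (E @ [Suc m]) \<and> m \<le> 2 * pos \<and> pos \<le> m"
      using less.prems(1,2) False by simp
    ultimately show ?thesis
      by (intro exI[of _ "E @ [Suc m]"] exI[of _ 1]) auto
  qed
qed

lemma z_End_zero_run:
  fixes c :: nat
  assumes "c \<noteq> 0"
  obtains E cnt e0 where
    "z_End (replicate m 0 @ c # R) = cnt + length (lzend_phrases (replicate m 0 @ c # R) E (Suc m))"
    "1 \<le> cnt" "2 ^ (cnt - 1) \<le> m + 1"
    "\<forall>e\<in>set E. e \<le> Suc m" "Suc m \<in> set E" "e0 \<in> set E" "m \<le> 2 * e0" "e0 \<le> m"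
proof -
  have "\<exists>E cnt. length (lzend_phrases (replicate m 0 @ c # R) [0] 0)
        = cnt + length (lzend_phrases (replicate m 0 @ c # R) E (Suc m))
      \<and> 1 \<le> cnt \<and> (0 + 1) * 2 ^ (cnt - 1) \<le> m + 1
      \<and> (\<forall>e\<in>set E. e \<le> Suc m) \<and> Suc m \<in> set E
      \<and> (\<exists>e0\<in>set E. m \<le> 2 * e0 \<and> e0 \<le> m)"
    by (rule lzend_phrases_zero_run[OF refl assms]) simp_all
  then obtain E cnt e0 where
    "length (lzend_phrases (replicate m 0 @ c # R) [0] 0)
       = cnt + length (lzend_phrases (replicate m 0 @ c # R) E (Suc m))"
    "1 \<le> cnt" "2 ^ (cnt - 1) \<le> m + 1" "\<forall>e\<in>set E. e \<le> Suc m" "Suc m \<in> set E"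
    "e0 \<in> set E" "m \<le> 2 * e0" "e0 \<le> m"
    by auto
  then show thesis by (intro that) (simp_all add: z_End_eq)
qed

(* The last character j + 3 of block j occurs nowhere before it: 0, 1, 2, 3 are used outside. *)
definition blk :: "nat \<Rightarrow> nat list" where
  "blk j = replicate (j - 1) 0 @ [1, j + 3]"

fun blks :: "nat \<Rightarrow> nat \<Rightarrow> nat list" where
  "blks j 0 = []"
| "blks j (Suc d) = blk j @ blks (Suc j) d"

lemma length_blk: "1 \<le> j \<Longrightarrow> length (blk j) = Suc j"
  by (simp add: blk_def)

lemma length_blks: "1 \<le> j \<Longrightarrow> 2 * length (blks j d) = d * (2 * j + d + 1)"
  by (induction d arbitrary: j) (auto simp: length_blk algebra_simps)

lemma blk_nth_last: "1 \<le> j \<Longrightarrow> blk j ! j = j + 3"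
  by (cases j) (simp_all add: blk_def nth_append)

lemma length_lzend_phrases_blk_copy:
  assumes "1 \<le> j" "e \<in> set E" "suffix (replicate (j - 1) 0 @ [1]) (take e U)"
    and "\<forall>e\<in>set E. e \<le> length U" "\<forall>c\<in>set U. c < j + 3"
  shows "length (lzend_phrases (U @ blk j @ V) E (length U)) =
    Suc (length (lzend_phrases (U @ blk j @ V) (E @ [length U + Suc j]) (length U + Suc j)))"
proof (rule length_lzend_phrases_fresh_step[OF _ assms(2) _ _ assms(4)])
  have "e \<le> length U" using assms(2,4) by blast
  obtain zs where zs: "take e U = zs @ replicate (j - 1) 0 @ [1]"
    using assms(3) by (rule suffixE)
  have "length (take e U) = e" using \<open>e \<le> length U\<close> by simp
  then have "length zs + j = e" unfolding zs using assms(1) by simp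
  then show "j \<le> e" by simp
  show "take j (drop (length U) (U @ blk j @ V)) = drop (e - j) (take e (U @ blk j @ V))"
    using zs \<open>e \<le> length U\<close> \<open>length zs + j = e\<close> assms(1) by (simp add: blk_def)
  show "length U + j < length (U @ blk j @ V)" using assms(1) by (simp add: length_blk)
  show "(U @ blk j @ V) ! (length U + j) \<notin> set (take (length U) (U @ blk j @ V))"
    using assms(1,5) by (auto simp: nth_append length_blk blk_nth_last)
qed

lemma length_lzend_phrases_blks_copy:
  assumes "1 \<le> j" "e \<in> set E" "suffix (replicate r 0 @ [1]) (take e U)" "j + d \<le> r + 2"
    and "\<forall>e\<in>set E. e \<le> length U" "\<forall>c\<in>set U. c < j + 3"
  shows "length (lzend_phrases (U @ blks j d) E (length U)) = d"
  using assms
proof (induction d arbitrary: U E j)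
  case 0
  then show ?case by (simp add: lzend_phrases_Nil)
next
  case (Suc d)
  have "replicate r (0::nat) @ [1] = replicate (r - (j - 1)) 0 @ (replicate (j - 1) 0 @ [1])"
    using Suc.prems(4) by (simp flip: replicate_add)
  then have "suffix (replicate (j - 1) 0 @ [1]) (replicate r (0::nat) @ [1])"
    by (rule suffixI)
  then have "suffix (replicate (j - 1) 0 @ [1]) (take e U)"
    using Suc.prems(3) by (rule suffix_order.trans)
  then have "length (lzend_phrases (U @ blk j @ blks (Suc j) d) E (length U)) =
      Suc (length (lzend_phrases ((U @ blk j) @ blks (Suc j) d) (E @ [length U + Suc j])
        (length U + Suc j)))"
    using Suc.prems(1,2,5,6) length_lzend_phrases_blk_copy by simp
  moreover have "e \<le> length U" using Suc.prems(2,5) by blast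
  then have "length (lzend_phrases ((U @ blk j) @ blks (Suc j) d) (E @ [length U + Suc j])
      (length (U @ blk j))) = d"
    using Suc.prems(1-5) Suc.prems(6)[unfolded Ball_def]
    by (intro Suc.IH) (auto simp: length_blk blk_def)
  ultimately show ?case using Suc.prems(1) by (simp add: length_blk)
qed

lemma sublist_snoc_append_notin:
  assumes "sublist (xs @ [a]) (ys @ zs)" "a \<notin> set zs"
  shows "sublist (xs @ [a]) ys"
  using assms
proof (induction zs rule: rev_induct)
  case Nil
  then show ?case by simp
next
  case (snoc z zs)
  then show ?case using snoc_sublist_snoc[of xs a "ys @ zs" z] by auto
qed

lemma not_sublist_append_blk:
  assumes "1 \<le> j" "\<not> sublist (replicate (j - 1) 0 @ [1]) U" "\<not> suffix [0] U"
  shows "\<not> sublist (replicate j 0 @ [1]) (U @ blk j)"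
proof
  have zeros: "replicate j (0::nat) = [0] @ replicate (j - 1) 0"
    using assms(1) by (cases j) simp_all
  have blk: "U @ blk j = ((U @ replicate (j - 1) 0) @ [1]) @ [j + 3]" by (simp add: blk_def)
  assume "sublist (replicate j 0 @ [1]) (U @ blk j)"
  then have "sublist (replicate j 0 @ [1]) ((U @ replicate (j - 1) 0) @ [1])"
    unfolding blk by (rule sublist_snoc_append_notin) simp
  then consider "suffix (replicate j 0) (U @ replicate (j - 1) 0)"
    | "sublist (replicate j 0 @ [1]) (U @ replicate (j - 1) 0)"
    using snoc_sublist_snoc[of "replicate j 0" 1 "U @ replicate (j - 1) 0" 1] by blast
  then show False
  proof cases
    case 1
    with zeros assms(3) show False by (metis same_suffix_suffix)
  next
    case 2
    then have "sublist (replicate j 0 @ [1]) U"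
      by (rule sublist_snoc_append_notin) simp
    moreover have "sublist (replicate (j - 1) (0::nat) @ [1]) (replicate j 0 @ [1])"
      unfolding zeros by (metis append_assoc sublist_append_leftI)
    ultimately show False
      using assms(2) sublist_order.order_trans by blast
  qed
qed

lemma length_lzend_phrases_blk_split:
  assumes "1 \<le> j" "e \<in> set E" "take e U = replicate e 0" "j \<le> Suc e"
    and "\<forall>e\<in>set E. e \<le> length U" "\<not> sublist (replicate (j - 1) 0 @ [1]) U"
    and "\<forall>c\<in>set U. c < j + 3"
  shows "length (lzend_phrases (U @ blk j @ V) E (length U)) =
    Suc (Suc (length (lzend_phrases (U @ blk j @ V) (E @ [length U + j, Suc (length U + j)])
      (Suc (length U + j)))))"
proof -
  define T where "T = U @ blk j @ V"
  have "e \<le> length U" using assms(2,5) by blast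
  have "length (lzend_phrases T E (length U)) =
      Suc (length (lzend_phrases T (E @ [length U + Suc (j - 1)]) (length U + Suc (j - 1))))"
  proof (rule length_lzend_phrases_copy_step[OF _ assms(2) _ _ assms(5)])
    show "length U + (j - 1) < length T" using assms(1) by (simp add: T_def length_blk)
    show "j - 1 \<le> e" using assms(4) by simp
    show "take (j - 1) (drop (length U) T) = drop (e - (j - 1)) (take e T)"
      using assms(3,4) \<open>e \<le> length U\<close> by (simp add: T_def blk_def)
    show "\<not> sublist (take (Suc (j - 1)) (drop (length U) T)) (take (length U) T)"
      using assms(1,6) by (simp add: T_def blk_def)
  qed
  moreover have "length (lzend_phrases T (E @ [length U + j]) (length U + j)) =
      Suc (length (lzend_phrases T (E @ [length U + j, Suc (length U + j)]) (Suc (length U + j))))"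
  proof -
    have "take (length U + j) T = U @ replicate (j - 1) 0 @ [1]"
      using assms(1) by (simp add: T_def blk_def)
    moreover have "T ! (length U + j) = j + 3"
      using assms(1) by (simp add: T_def nth_append length_blk blk_nth_last)
    ultimately have "T ! (length U + j) \<notin> set (take (length U + j) T)"
      using assms(7) by auto
    moreover have "\<forall>e\<in>set (E @ [length U + j]). e \<le> length U + j" using assms(5) by auto
    moreover have "length U + j < length T" using assms(1) by (simp add: T_def length_blk)
    ultimately show ?thesis
      using length_lzend_phrases_fresh_char[of "length U + j" T "E @ [length U + j]"] by simp
  qed
  ultimately show ?thesis using assms(1) by (simp add: T_def)
qed

lemma length_lzend_phrases_blks_split:
  assumes "1 \<le> j" "e \<in> set E" "take e U = replicate e 0" "j + d \<le> e + 2"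
    and "\<forall>e\<in>set E. e \<le> length U" "\<not> sublist (replicate (j - 1) 0 @ [1]) U" "\<not> suffix [0] U"
    and "\<forall>c\<in>set U. c < j + 3"
  shows "length (lzend_phrases (U @ blks j d) E (length U)) = 2 * d"
  using assms
proof (induction d arbitrary: U E j)
  case 0
  then show ?case by (simp add: lzend_phrases_Nil)
next
  case (Suc d)
  have "length (lzend_phrases (U @ blk j @ blks (Suc j) d) E (length U)) =
      Suc (Suc (length (lzend_phrases ((U @ blk j) @ blks (Suc j) d)
        (E @ [length U + j, Suc (length U + j)]) (Suc (length U + j)))))"
    using Suc.prems(1-6,8) length_lzend_phrases_blk_split by simp
  moreover have "e \<le> length U" using Suc.prems(2,5) by blast
  then have "length (lzend_phrases ((U @ blk j) @ blks (Suc j) d)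
      (E @ [length U + j, Suc (length U + j)]) (length (U @ blk j))) = 2 * d"
  proof (intro Suc.IH)
    show "\<not> sublist (replicate (Suc j - 1) 0 @ [1]) (U @ blk j)"
      using not_sublist_append_blk Suc.prems(1,6,7) by simp
    show "\<not> suffix [0] (U @ blk j)"
      using snoc_suffix_snoc[of "[]" 0 "U @ replicate (j - 1) 0 @ [1]" "j + 3"]
      by (simp add: blk_def)
    show "\<forall>c\<in>set (U @ blk j). c < Suc j + 3" using Suc.prems(8) by (auto simp: blk_def)
  qed (use Suc.prems in \<open>auto simp: length_blk\<close>)
  ultimately show ?case using Suc.prems(1) by (simp add: length_blk)
qed

definition base_text :: "nat \<Rightarrow> nat \<Rightarrow> nat list" where
  "base_text m K = replicate m 0 @ 1 # 2 # blks 1 K"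

fun edited_text :: "edit_type \<Rightarrow> nat \<Rightarrow> nat \<Rightarrow> nat list" where
  "edited_text Sub m K = replicate m 0 @ 3 # 2 # blks 1 K"
| "edited_text Ins m K = replicate m 0 @ 3 # 1 # 2 # blks 1 K"
| "edited_text Del m K = replicate m 0 @ 2 # blks 1 K"

lemma ed_self: "ed xs xs = 0"
  by (induction xs) simp_all

lemma ed_eq_0D: "ed xs ys = 0 \<Longrightarrow> xs = ys"
  by (induction xs ys rule: ed.induct) (auto split: if_splits)

lemma ed_append_left_le: "ed (u @ xs) (u @ ys) \<le> ed xs ys"
proof (induction u)
  case (Cons a u)
  have "ed ((a # u) @ xs) ((a # u) @ ys) \<le> ed (u @ xs) (u @ ys)" by simp
  then show ?case using Cons by linarith
qed simp

lemma ed_append_left_eq_1: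
  assumes "ed xs ys \<le> 1" "xs \<noteq> ys"
  shows "ed (u @ xs) (u @ ys) = 1"
proof -
  have "ed (u @ xs) (u @ ys) \<noteq> 0" using ed_eq_0D assms(2) by fastforce
  then show ?thesis using ed_append_left_le[of u xs ys] assms(1) by linarith
qed

lemma ed_substitute_le: "ed (a # xs) (b # xs) \<le> 1"
  using ed_self[of xs] by simp

lemma ed_insert_le: "ed (a # xs) (b # a # xs) \<le> 1"
  using ed_self[of "a # xs"] by (simp only: ed.simps)

lemma ed_delete_le: "ed (a # b # xs) (b # xs) \<le> 1"
  using ed_self[of "b # xs"] by (simp only: ed.simps)

lemma edit_ok_edited_text: "edit_ok k (base_text m K) (edited_text k m K)"
proof (cases k)
  case Sub
  then show ?thesis
    using ed_append_left_eq_1[OF ed_substitute_le, of 1 "2 # blks 1 K" 3 "replicate m 0"]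
    by (simp add: edit_ok_def base_text_def)
next
  case Ins
  then show ?thesis
    using ed_append_left_eq_1[OF ed_insert_le, of 1 "2 # blks 1 K" 3 "replicate m 0"]
    by (simp add: edit_ok_def base_text_def)
next
  case Del
  then show ?thesis
    using ed_append_left_eq_1[OF ed_delete_le, of 1 2 "blks 1 K" "replicate m 0"]
    by (simp add: edit_ok_def base_text_def)
qed

lemma z_End_base_text:
  assumes "K \<le> Suc m"
  obtains p where "z_End (base_text m K) = p + 1 + K" "1 \<le> p" "2 ^ (p - 1) \<le> m + 1"
proof -
  define U where "U = replicate m 0 @ [1::nat, 2]"
  have T: "base_text m K = replicate m 0 @ 1 # 2 # blks 1 K" "base_text m K = U @ blks 1 K"
    by (simp_all add: base_text_def U_def)
  obtain E cnt e0 where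
    z: "z_End (base_text m K) = cnt + length (lzend_phrases (base_text m K) E (Suc m))"
    and cnt: "1 \<le> cnt" "2 ^ (cnt - 1) \<le> m + 1"
    and E: "\<forall>e\<in>set E. e \<le> Suc m" "Suc m \<in> set E" "e0 \<in> set E" "m \<le> 2 * e0" "e0 \<le> m"
    unfolding T(1) by (rule z_End_zero_run[where c = 1 and m = m and R = "2 # blks 1 K"]) simp
  have "length (lzend_phrases (base_text m K) E (Suc m)) =
      Suc (length (lzend_phrases (base_text m K) (E @ [Suc (Suc m)]) (Suc (Suc m))))"
    using E by (intro length_lzend_phrases_fresh_char) (auto simp: T(1) nth_append)
  moreover have "length (lzend_phrases (U @ blks 1 K) (E @ [length U]) (length U)) = K"
  proof (rule length_lzend_phrases_blks_copy[where e = "Suc m" and r = m])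
    show "suffix (replicate m 0 @ [1]) (take (Suc m) U)" by (simp add: U_def)
    show "\<forall>e\<in>set (E @ [length U]). e \<le> length U" using E(1) by (auto simp: U_def)
  qed (use assms E(2) in \<open>auto simp: U_def\<close>)
  ultimately have "z_End (base_text m K) = cnt + 1 + K"
    using z by (simp add: T(2) U_def)
  then show thesis using cnt by (rule that)
qed

lemma z_End_edited_text_Sub:
  assumes "2 * K \<le> m"
  shows "2 * K + 1 \<le> z_End (edited_text Sub m K)"
proof -
  define U where "U = replicate m 0 @ [3::nat, 2]"
  have T: "edited_text Sub m K = replicate m 0 @ 3 # 2 # blks 1 K"
    "edited_text Sub m K = U @ blks 1 K"
    by (simp_all add: U_def)
  obtain E cnt e0 where
    z: "z_End (edited_text Sub m K) = cnt + length (lzend_phrases (edited_text Sub m K) E (Suc m))"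
    and cnt: "1 \<le> cnt" "2 ^ (cnt - 1) \<le> m + 1"
    and E: "\<forall>e\<in>set E. e \<le> Suc m" "Suc m \<in> set E" "e0 \<in> set E" "m \<le> 2 * e0" "e0 \<le> m"
    unfolding T(1) by (rule z_End_zero_run[where c = 3 and m = m and R = "2 # blks 1 K"]) simp
  have "length (lzend_phrases (edited_text Sub m K) E (Suc m)) =
      Suc (length (lzend_phrases (edited_text Sub m K) (E @ [Suc (Suc m)]) (Suc (Suc m))))"
    using E(1,2) by (intro length_lzend_phrases_fresh_char) (auto simp: T(1) nth_append)
  moreover have "length (lzend_phrases (U @ blks 1 K) (E @ [length U]) (length U)) = 2 * K"
  proof (rule length_lzend_phrases_blks_split[where e = e0])
    show "take e0 U = replicate e0 0" using E(5) by (simp add: U_def)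
    show "\<forall>e\<in>set (E @ [length U]). e \<le> length U" using E(1) by (auto simp: U_def)
    show "\<not> sublist (replicate (1 - 1) 0 @ [1]) U" by (auto simp: U_def dest: set_mono_sublist)
    show "\<not> suffix [0] U"
      using snoc_suffix_snoc[of "[]" 0 "replicate m 0 @ [3::nat]" 2] by (simp add: U_def)
  qed (use assms E in \<open>auto simp: U_def\<close>)
  ultimately have "z_End (edited_text Sub m K) = cnt + 1 + 2 * K"
    using z by (simp add: T(2) U_def)
  then show ?thesis using cnt by simp
qed

lemma z_End_edited_text_Del:
  assumes "2 * K \<le> m"
  shows "2 * K + 1 \<le> z_End (edited_text Del m K)"
proof -
  define U where "U = replicate m 0 @ [2::nat]"
  have T: "edited_text Del m K = replicate m 0 @ 2 # blks 1 K"
    "edited_text Del m K = U @ blks 1 K"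
    by (simp_all add: U_def)
  obtain E cnt e0 where
    z: "z_End (edited_text Del m K) = cnt + length (lzend_phrases (edited_text Del m K) E (Suc m))"
    and cnt: "1 \<le> cnt" "2 ^ (cnt - 1) \<le> m + 1"
    and E: "\<forall>e\<in>set E. e \<le> Suc m" "Suc m \<in> set E" "e0 \<in> set E" "m \<le> 2 * e0" "e0 \<le> m"
    unfolding T(1) by (rule z_End_zero_run[where c = 2 and m = m and R = "blks 1 K"]) simp
  have "length (lzend_phrases (U @ blks 1 K) E (length U)) = 2 * K"
  proof (rule length_lzend_phrases_blks_split[where e = e0])
    show "take e0 U = replicate e0 0" using E(5) by (simp add: U_def)
    show "\<not> sublist (replicate (1 - 1) 0 @ [1]) U" by (auto simp: U_def dest: set_mono_sublist)
  qed (use assms E in \<open>auto simp: U_def\<close>)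
  then have "z_End (edited_text Del m K) = cnt + 2 * K"
    using z by (simp add: T(2) U_def)
  then show ?thesis using cnt by simp
qed

lemma z_End_edited_text_Ins:
  assumes "2 * K \<le> m" "1 \<le> K"
  shows "2 * K + 1 \<le> z_End (edited_text Ins m K)"
proof -
  define U where "U = replicate m 0 @ [3::nat, 1, 2, 1, 4]"
  define T where "T = edited_text Ins m K"
  have "blks 1 K = [1, 4] @ blks 2 (K - 1)"
    using assms(2) by (cases K) (simp_all add: blk_def numeral_2_eq_2)
  then have T: "T = replicate m 0 @ 3 # 1 # 2 # blks 1 K" "T = U @ blks 2 (K - 1)"
    by (simp_all add: T_def U_def)
  obtain E cnt e0 where
    z: "z_End T = cnt + length (lzend_phrases T E (Suc m))"
    and cnt: "1 \<le> cnt" "2 ^ (cnt - 1) \<le> m + 1"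
    and E: "\<forall>e\<in>set E. e \<le> Suc m" "Suc m \<in> set E" "e0 \<in> set E" "m \<le> 2 * e0" "e0 \<le> m"
    unfolding T(1) by (rule z_End_zero_run[where c = 3 and m = m and R = "1 # 2 # blks 1 K"]) simp
  have E2: "\<forall>e\<in>set (E @ [Suc (Suc m)]). e \<le> Suc (Suc m)"
    and E3: "\<forall>e\<in>set (E @ [Suc (Suc m), Suc (Suc (Suc m))]). e \<le> Suc (Suc (Suc m))"
    using E(1) by auto
  have "length (lzend_phrases T E (Suc m)) =
      Suc (length (lzend_phrases T (E @ [Suc (Suc m)]) (Suc (Suc m))))"
    using E(1,2) by (intro length_lzend_phrases_fresh_char) (auto simp: T(1) nth_append)
  also have "\<dots> = Suc (Suc (length (lzend_phrases T (E @ [Suc (Suc m), Suc (Suc (Suc m))])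
      (Suc (Suc (Suc m))))))"
    using E2 length_lzend_phrases_fresh_char[of "Suc (Suc m)" T] by (simp add: T(1) nth_append)
  \<comment> \<open>Block 1 = [1, 4] still copies the 1 after the 3, so only the blocks from j = 2 on split.\<close>
  also have "\<dots> = Suc (Suc (Suc (length (lzend_phrases (U @ blks 2 (K - 1))
      (E @ [Suc (Suc m), Suc (Suc (Suc m)), length U]) (length U)))))"
    using E3 length_lzend_phrases_fresh_step[of "Suc (Suc (Suc m))" 1 T "Suc (Suc m)"]
    by (simp add: T(2) U_def nth_append)
  also have "length (lzend_phrases (U @ blks 2 (K - 1))
      (E @ [Suc (Suc m), Suc (Suc (Suc m)), length U]) (length U)) = 2 * (K - 1)"
  proof (rule length_lzend_phrases_blks_split[where e = e0])
    show "take e0 U = replicate e0 0" using E(5) by (simp add: U_def)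
    show "\<forall>e\<in>set (E @ [Suc (Suc m), Suc (Suc (Suc m)), length U]). e \<le> length U"
      using E(1) by (auto simp: U_def)
    show "\<not> sublist (replicate (2 - 1) 0 @ [1]) U"
      by (auto simp: U_def sublist_append Cons_eq_append_conv
          dest: set_mono_suffix set_mono_sublist)
    show "\<not> suffix [0] U"
      using snoc_suffix_snoc[of "[]" 0 "replicate m 0 @ [3::nat, 1, 2, 1]" 4] by (simp add: U_def)
  qed (use assms E in \<open>auto simp: U_def\<close>)
  finally show ?thesis using z cnt assms(2) by (simp add: T_def)
qed

lemma z_End_edited_text:
  assumes "2 * K \<le> m" "1 \<le> K"
  shows "2 * K + 1 \<le> z_End (edited_text k m K)"
  using assms z_End_edited_text_Sub z_End_edited_text_Ins z_End_edited_text_Del by (cases k) auto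

lemma square_le_exp2: "p\<^sup>2 \<le> (2::nat) ^ (p + 2)"
proof (induction p)
  case (Suc p)
  show ?case
  proof (cases "p \<le> 2")
    case True
    then have "p = 0 \<or> p = 1 \<or> p = 2" by auto
    then show ?thesis by (auto simp: power2_eq_square)
  next
    case False
    then have "3 * p \<le> p * p" by (intro mult_right_mono) auto
    have "(Suc p)\<^sup>2 = p * p + 2 * p + 1" by (simp add: power2_eq_square)
    also have "\<dots> \<le> 2 * p\<^sup>2" using False \<open>3 * p \<le> p * p\<close> by (simp only: power2_eq_square)
    also have "\<dots> \<le> 2 ^ (Suc p + 2)" using Suc.IH by simp
    finally show ?thesis .
  qed
qed simp

lemma square_bound_of_exp_bound:
  assumes "1 \<le> p" "2 ^ (p - 1) \<le> 3 * K + 4" "1 \<le> K"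
  shows "(2 * p + 1)\<^sup>2 \<le> 504 * K"
proof -
  have "p\<^sup>2 \<le> 2 ^ (p + 2)" by (rule square_le_exp2)
  also have "\<dots> = 8 * 2 ^ (p - 1)" using assms(1) by (cases p) simp_all
  also have "\<dots> \<le> 56 * K" using assms(2,3) by simp
  finally have "p * p \<le> 56 * K" by (simp add: power2_eq_square)
  moreover have "p \<le> p * p" using assms(1) by simp
  moreover have "(2 * p + 1)\<^sup>2 = 4 * (p * p) + 4 * p + 1"
    by (simp add: power2_eq_square algebra_simps)
  ultimately show ?thesis using assms(1) by linarith
qed

(* K is the largest number of blocks fitting into length n next to a zero run of length at least
   2 K; the zero run then has length O(K). *)
lemma lzend_edit_witness:
  assumes "(K0 + 5)\<^sup>2 \<le> n"
  obtains T T' :: "nat list" and K p where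
    "length T = n" "edit_ok k T T'" "z_End T = p + 1 + K" "2 * K + 1 \<le> z_End T'"
    "K0 < K" "(2 * p + 1)\<^sup>2 \<le> 504 * K" "2 * n < (K + 5)\<^sup>2"
proof -
  define P where "P K \<longleftrightarrow> K * K + 7 * K + 4 \<le> 2 * n" for K
  define K where "K = Greatest P"
  have bounded: "P y \<Longrightarrow> y \<le> n" for y by (auto simp: P_def)
  have "P (Suc K0)" using assms by (simp add: P_def power2_eq_square algebra_simps)
  then have "P K" "Suc K0 \<le> K"
    unfolding K_def using bounded by (blast intro: GreatestI_nat Greatest_le_nat)+
  have "\<not> P (Suc K)"
    unfolding K_def using bounded Greatest_le_nat[of P "Suc (Greatest P)" n] by auto
  define m where "m = n - 2 - length (blks 1 K)"
  have blks: "2 * length (blks 1 K) = K * K + 3 * K" using length_blks[of 1 K] by simp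
  have m: "2 * K \<le> m" "m + 1 \<le> 3 * K + 4" "m + 2 + length (blks 1 K) = n"
    using \<open>P K\<close> \<open>\<not> P (Suc K)\<close> blks by (auto simp: m_def P_def)
  obtain p where p: "z_End (base_text m K) = p + 1 + K" "1 \<le> p" "2 ^ (p - 1) \<le> m + 1"
    using m(1) z_End_base_text[of K m] by auto
  have "(2 * p + 1)\<^sup>2 \<le> 504 * K"
    using p(2,3) m(2) \<open>Suc K0 \<le> K\<close> by (intro square_bound_of_exp_bound) simp_all
  moreover have "2 * n < (K + 5)\<^sup>2"
    using \<open>\<not> P (Suc K)\<close> by (simp add: P_def power2_eq_square algebra_simps)
  moreover have "length (base_text m K) = n" using m(3) by (simp add: base_text_def)
  moreover have "2 * K + 1 \<le> z_End (edited_text k m K)"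
    using m(1) \<open>Suc K0 \<le> K\<close> by (intro z_End_edited_text) auto
  ultimately show thesis
    using edit_ok_edited_text p(1) \<open>Suc K0 \<le> K\<close>
    by (intro that[of "base_text m K" "edited_text k m K" p K]) simp_all
qed

lemma z_End_edit_le: "edit_ok k T T' \<Longrightarrow> z_End T' \<le> Suc (length T)"
  using z_End_le_length[of T'] by (cases k) (auto simp: edit_ok_def)

lemma ratio_le_MS:
  fixes T T' :: "nat list"
  assumes "length T = n" "edit_ok k T T'"
  shows "real (z_End T') / real (z_End T) \<le> MS z_End k n"
proof -
  have bound: "real (z_End B) / real (z_End A) \<le> real (Suc n)"
    if "length A = n" "edit_ok k A B" for A B :: "nat list"
  proof -
    have "real (z_End B) / real (z_End A) \<le> real (z_End B)"
      by (cases "z_End A = 0") (simp_all add: divide_le_eq mult_le_cancel_left1)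
    also have "\<dots> \<le> real (Suc n)" using z_End_edit_le[OF that(2)] that(1) by simp
    finally show ?thesis .
  qed
  show ?thesis
    unfolding MS_def
    by (intro cSup_upper bdd_aboveI[of _ "real (Suc n)"]) (use assms bound in blast)+
qed

lemma diff_le_AS:
  fixes T T' :: "nat list"
  assumes "length T = n" "edit_ok k T T'"
  shows "real (z_End T') - real (z_End T) \<le> AS z_End k n"
proof -
  have bound: "real (z_End B) - real (z_End A) \<le> real (Suc n)"
    if "length A = n" "edit_ok k A B" for A B :: "nat list"
    using z_End_edit_le[OF that(2)] that(1) by simp
  show ?thesis
    unfolding AS_def
    by (intro cSup_upper bdd_aboveI[of _ "real (Suc n)"]) (use assms bound in blast)+
qed

lemma two_minus_mult_lt:
  fixes d :: real
  assumes "0 < d" "(2 * p + 1)\<^sup>2 \<le> 504 * K" "504 < d\<^sup>2 * real K"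
  shows "(2 - d) * real (p + 1 + K) < real (2 * K + 1)"
proof -
  have "504 * real K < (d\<^sup>2 * real K) * real K"
    using assms(3) by (intro mult_strict_right_mono) (auto intro: ccontr)
  also have "\<dots> = (d * real K)\<^sup>2" by (simp add: power2_eq_square)
  finally have "504 * real K < (d * real K)\<^sup>2" .
  moreover have "(real (2 * p + 1))\<^sup>2 \<le> 504 * real K"
    using of_nat_mono[OF assms(2)] by (simp only: of_nat_power of_nat_mult of_nat_numeral)
  ultimately have "(real (2 * p + 1))\<^sup>2 < (d * real K)\<^sup>2" by linarith
  then have "real (2 * p + 1) < d * real K"
    by (rule power_less_imp_less_base) (use assms(1) in simp)
  moreover have "d * real K \<le> d * real (p + 1 + K)" using assms(1) by simp
  ultimately show ?thesis by (simp add: algebra_simps)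
qed

lemma liminf_MS_z_End_ge_2: "liminf (\<lambda>n. ereal (MS z_End k n)) \<ge> 2"
  unfolding le_Liminf_iff
proof (intro allI impI)
  fix y :: ereal
  assume "y < 2"
  show "\<forall>\<^sub>F n in sequentially. y < ereal (MS z_End k n)"
  proof (cases y)
    case (real r)
    define d where "d = 2 - r"
    have "0 < d" using \<open>y < 2\<close> real by (simp add: d_def)
    define K0 where "K0 = nat \<lceil>504 / d\<^sup>2\<rceil>"
    show ?thesis
      using eventually_ge_at_top[of "(K0 + 5)\<^sup>2"]
    proof (rule eventually_mono)
      fix n assume "(K0 + 5)\<^sup>2 \<le> n"
      then obtain T T' :: "nat list" and K p where
        T: "length T = n" "edit_ok k T T'" "z_End T = p + 1 + K" "2 * K + 1 \<le> z_End T'"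
          "K0 < K" "(2 * p + 1)\<^sup>2 \<le> 504 * K" "2 * n < (K + 5)\<^sup>2"
        by (rule lzend_edit_witness)
      have "504 / d\<^sup>2 < real K"
        using T(5) real_nat_ceiling_ge[of "504 / d\<^sup>2"] unfolding K0_def by linarith
      then have "504 < d\<^sup>2 * real K" using \<open>0 < d\<close> by (simp add: divide_less_eq mult.commute)
      then have "r * real (z_End T) < real (2 * K + 1)"
        using two_minus_mult_lt[OF \<open>0 < d\<close> T(6)] T(3) by (simp add: d_def)
      also have "\<dots> \<le> real (z_End T')" using T(4) by (simp only: of_nat_le_iff)
      finally have "r * real (z_End T) < real (z_End T')" .
      then have "r < real (z_End T') / real (z_End T)"
        using T(3) by (simp add: less_divide_eq)
      also have "\<dots> \<le> MS z_End k n" by (rule ratio_le_MS[OF T(1,2)])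
      finally show "y < ereal (MS z_End k n)" using real by simp
    qed
  next
    case PInf
    with \<open>y < 2\<close> show ?thesis by simp
  qed simp
qed

lemma z_End_edit_gap:
  "\<exists>c > 0. \<forall>N. \<exists>T T' :: nat list. N \<le> z_End T \<and> edit_ok k T T' \<and>
     real (z_End T') - real (z_End T) \<ge> real (z_End T) - c * sqrt (real (z_End T))"
proof (intro exI[of _ 23] conjI allI)
  fix N :: nat
  obtain T T' :: "nat list" and K p where
    T: "length T = (N + 5)\<^sup>2" "edit_ok k T T'" "z_End T = p + 1 + K" "2 * K + 1 \<le> z_End T'"
      "N < K" "(2 * p + 1)\<^sup>2 \<le> 504 * K" "2 * (N + 5)\<^sup>2 < (K + 5)\<^sup>2"
    by (rule lzend_edit_witness[of N "(N + 5)\<^sup>2"]) simp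
  define z where "z = real (z_End T)"
  have "(2 * p + 1)\<^sup>2 \<le> 23\<^sup>2 * z_End T" using T(3,6) by simp
  then have "real ((2 * p + 1)\<^sup>2) \<le> real (23\<^sup>2 * z_End T)" by (rule of_nat_mono)
  then have "(real (2 * p + 1))\<^sup>2 \<le> 23\<^sup>2 * z" by (simp only: z_def of_nat_power of_nat_mult) simp
  then have "real (2 * p + 1) \<le> sqrt (23\<^sup>2 * z)" by (rule real_le_rsqrt)
  also have "\<dots> = 23 * sqrt z" by (simp add: real_sqrt_mult)
  finally have "real (2 * p + 1) \<le> 23 * sqrt z" .
  then have "real (z_End T') - z \<ge> z - 23 * sqrt z"
    using T(3,4) unfolding z_def by simp
  then show "\<exists>T T' :: nat list. N \<le> z_End T \<and> edit_ok k T T' \<and>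
      real (z_End T') - real (z_End T) \<ge> real (z_End T) - 23 * sqrt (real (z_End T))"
    using T(2,3,5) unfolding z_def by (intro exI[of _ T] exI[of _ T']) simp
qed simp

lemma AS_z_End_bigomega_sqrt: "(\<lambda>n. AS z_End k n) \<in> \<Omega>(\<lambda>n. sqrt (real n))"
proof (rule landau_omega.bigI[of "1 / 10"])
  show "\<forall>\<^sub>F n in sequentially. norm (AS z_End k n) \<ge> 1 / 10 * norm (sqrt (real n))"
    using eventually_ge_at_top[of "(504 + 5)\<^sup>2"]
  proof (rule eventually_mono)
    fix n :: nat assume "(504 + 5)\<^sup>2 \<le> n"
    then obtain T T' :: "nat list" and K p where
      T: "length T = n" "edit_ok k T T'" "z_End T = p + 1 + K" "2 * K + 1 \<le> z_End T'"
        "504 < K" "(2 * p + 1)\<^sup>2 \<le> 504 * K" "2 * n < (K + 5)\<^sup>2"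
      by (rule lzend_edit_witness)
    have "(2 * p)\<^sup>2 \<le> (2 * p + 1)\<^sup>2" by (rule power_mono) simp_all
    also have "\<dots> \<le> 504 * K" by (rule T(6))
    also have "\<dots> \<le> K * K" using T(5) by (intro mult_right_mono) simp_all
    also have "\<dots> = K\<^sup>2" by (simp add: power2_eq_square)
    finally have "(2 * p)\<^sup>2 \<le> K\<^sup>2" .
    then have "2 * p \<le> K" by (rule power2_le_imp_le) simp
    then have "real K / 2 \<le> real (z_End T') - real (z_End T)" using T(3,4) by simp
    also have "\<dots> \<le> AS z_End k n" by (rule diff_le_AS[OF T(1,2)])
    finally have AS: "real K / 2 \<le> AS z_End k n" .
    have "35 * K \<le> K * K" using T(5) by (intro mult_right_mono) simp_all
    moreover have "(K + 5)\<^sup>2 = K * K + 10 * K + 25" "(5 * K)\<^sup>2 = 25 * (K * K)"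
      by (simp_all add: power2_eq_square algebra_simps)
    ultimately have "n \<le> (5 * K)\<^sup>2" using T(5,7) by linarith
    then have "sqrt (real n) \<le> 5 * real K"
      by (intro real_le_lsqrt) (simp_all flip: of_nat_power)
    with AS show "norm (AS z_End k n) \<ge> 1 / 10 * norm (sqrt (real n))" by simp
  qed
qed simp

theorem mainTheorem16:
  shows "\<forall>k :: edit_type.
     liminf (\<lambda>n. ereal (MS z_End k n)) \<ge> (2::ereal)
   \<and> (\<exists>c > 0. \<forall>N. \<exists>T T' :: nat list. N \<le> z_End T \<and> edit_ok k T T' \<and>
          real (z_End T') - real (z_End T) \<ge> real (z_End T) - c * sqrt (real (z_End T)))
   \<and> (\<lambda>n. AS z_End k n) \<in> \<Omega>(\<lambda>n. sqrt (real n))"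
  using liminf_MS_z_End_ge_2 z_End_edit_gap AS_z_End_bigomega_sqrt by blast

end
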